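(* Let $F:\mathcal{P}(V,A)\to 2^A\setminus\{\emptyset\}$ be a committee selection rule satisfying SPO and SPP. Let $P$ be a profile, $i$ a voter, $W=F(P)$, $t=\mathrm{best}(P_i,W)$, $b=\mathrm{worst}(P_i,W)$, and suppose $t\neq b$. Let $s\in A$ with $s\neq t,b$ and let $W'=F(P^{i\uparrow s})$. Then (1) $\mathrm{best}(P_i^{\uparrow s},W')\in\{t,s\}$, and (2) $\mathrm{worst}(P_i^{\uparrow s},W')\in\{b,s\}$.
   Context: $V$ is a finite nonempty set of voters, $A$ a finite set of alternatives; a profile $P$ assigns to each voter $i$ a linear order $P_i$ on $A$ (strict part $\succ_i$, weak part $\succeq_i$); $P_i'P_{-i}$ replaces voter $i$'s order by $P_i'$. A committee selection rule maps each profile to a nonempty subset of $A$. $\mathrm{best}(P_i,W)$, $\mathrm{worst}(P_i,W)$ are the $P_i$-best and $P_i$-worst elements of nonempty $W\subseteq A$. SPO: for all $P$, $i$, $P_i'$, $\mathrm{best}(P_i,F(P))\succeq_i\mathrm{best}(P_i,F(P_i'P_{-i}))$; SPP: same with $\mathrm{worst}$. $P_i^{\uparrow s}$ is the linear order obtained from $P_i$ by swapping $s$ with the alternative directly above it, and $P^{i\uparrow s}$ is the profile obtained from $P$ by replacing $P_i$ with $P_i^{\uparrow s}$. *)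

theory Defs
  imports Main
begin

text \<open>A linear order on the finite set A of alternatives is represented as a ranking list:
  a list without repetitions whose set of elements is A; earlier positions are better.\<close>

definition lin_order :: "'a set \<Rightarrow> 'a list \<Rightarrow> bool" where
  "lin_order A xs \<longleftrightarrow> distinct xs \<and> set xs = A"

definition pos :: "'a list \<Rightarrow> 'a \<Rightarrow> nat" where
  "pos xs x = (LEAST k. k < length xs \<and> xs ! k = x)"

definition weak_pref :: "'a list \<Rightarrow> 'a \<Rightarrow> 'a \<Rightarrow> bool" where
  "weak_pref xs x y \<longleftrightarrow> pos xs x \<le> pos xs y"

definition profile :: "'v set \<Rightarrow> 'a set \<Rightarrow> ('v \<Rightarrow> 'a list) \<Rightarrow> bool" where
  "profile V A P \<longleftrightarrow> (\<forall>i\<in>V. lin_order A (P i))"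

definition committee_rule :: "'v set \<Rightarrow> 'a set \<Rightarrow> (('v \<Rightarrow> 'a list) \<Rightarrow> 'a set) \<Rightarrow> bool" where
  "committee_rule V A F \<longleftrightarrow> (\<forall>P. profile V A P \<longrightarrow> F P \<noteq> {} \<and> F P \<subseteq> A)"

definition best :: "'a list \<Rightarrow> 'a set \<Rightarrow> 'a" where
  "best xs W = hd (filter (\<lambda>x. x \<in> W) xs)"

definition worst :: "'a list \<Rightarrow> 'a set \<Rightarrow> 'a" where
  "worst xs W = last (filter (\<lambda>x. x \<in> W) xs)"

definition SPO :: "'v set \<Rightarrow> 'a set \<Rightarrow> (('v \<Rightarrow> 'a list) \<Rightarrow> 'a set) \<Rightarrow> bool" where
  "SPO V A F \<longleftrightarrow> (\<forall>P i P'. profile V A P \<longrightarrow> i \<in> V \<longrightarrow> lin_order A P' \<longrightarrow>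
      weak_pref (P i) (best (P i) (F P)) (best (P i) (F (P(i := P')))))"

definition SPP :: "'v set \<Rightarrow> 'a set \<Rightarrow> (('v \<Rightarrow> 'a list) \<Rightarrow> 'a set) \<Rightarrow> bool" where
  "SPP V A F \<longleftrightarrow> (\<forall>P i P'. profile V A P \<longrightarrow> i \<in> V \<longrightarrow> lin_order A P' \<longrightarrow>
      weak_pref (P i) (worst (P i) (F P)) (worst (P i) (F (P(i := P')))))"

definition swap_up :: "'a list \<Rightarrow> 'a \<Rightarrow> 'a list" where
  "swap_up xs s = (let k = pos xs s in
     if 0 < k \<and> k < length xs then xs[k - 1 := s, k := xs ! (k - 1)] else xs)"

end

theory Submission
  imports Defs
begin

text \<open>Lifting $s$ by one position changes the relative order of exactly one pair, namely $s$
  and its predecessor $u$. Hence if $t' = \mathrm{best}(P_i^{\uparrow s}, W')$ were neither $t$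
  nor $s$, the pair $t', t$ would be ordered alike in both rankings, and strategy-proofness for
  optimists, applied once from $P$ and once back from $P^{i\uparrow s}$, would force $t$ both
  strictly above and weakly below $t'$. For the worst elements the same argument works once one
  notes that $b$ is still the worst element of $W$ after the swap; the only extra case,
  $\mathrm{worst}(P_i, W') = s$, would make both $b$ and $\mathrm{worst}(P_i^{\uparrow s}, W')$
  the predecessor $u$ of $s$.\<close>

lemma pos_Cons:
  assumes "y \<in> set (x # xs)"
  shows "pos (x # xs) y = (if y = x then 0 else Suc (pos xs y))"
proof (cases "y = x")
  case True
  then show ?thesis unfolding pos_def by (intro Least_equality) auto
next
  case False
  obtain j where j: "j < length (x # xs)" "(x # xs) ! j = y"
    using assms by (metis in_set_conv_nth)
  have "(LEAST k. k < length (x # xs) \<and> (x # xs) ! k = y)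
      = Suc (LEAST m. Suc m < length (x # xs) \<and> (x # xs) ! Suc m = y)"
    by (rule Least_Suc[of _ j]) (use False j in auto)
  then show ?thesis using False unfolding pos_def by simp
qed

lemma pos_less_length_nth:
  assumes "x \<in> set xs"
  shows "pos xs x < length xs \<and> xs ! pos xs x = x"
proof -
  obtain j where "j < length xs" "xs ! j = x"
    using assms by (metis in_set_conv_nth)
  then show ?thesis unfolding pos_def by (metis (mono_tags, lifting) LeastI)
qed

lemma pos_nth: "distinct xs \<Longrightarrow> j < length xs \<Longrightarrow> pos xs (xs ! j) = j"
  unfolding pos_def by (rule Least_equality) (auto simp: nth_eq_iff_index_eq)

lemma pos_eq_iff: "x \<in> set xs \<Longrightarrow> y \<in> set xs \<Longrightarrow> pos xs x = pos xs y \<longleftrightarrow> x = y"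
  by (metis pos_less_length_nth)

lemma best_mem_pos_le:
  assumes "distinct xs" "w \<in> set xs" "w \<in> W"
  shows "best xs W \<in> W \<and> best xs W \<in> set xs \<and> pos xs (best xs W) \<le> pos xs w"
  using assms
proof (induction xs)
  case (Cons x xs)
  show ?case
  proof (cases "x \<in> W")
    case True
    then show ?thesis by (simp add: best_def pos_Cons)
  next
    case False
    then have "w \<in> set xs" "w \<noteq> x" using Cons.prems by auto
    with Cons.IH Cons.prems False show ?thesis
      by (auto simp: best_def pos_Cons)
  qed
qed simp

lemma worst_mem_pos_ge:
  assumes "distinct xs" "w \<in> set xs" "w \<in> W"
  shows "worst xs W \<in> W \<and> worst xs W \<in> set xs \<and> pos xs w \<le> pos xs (worst xs W)"
  using assms
proof (induction xs arbitrary: w)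
  case (Cons x xs)
  show ?case
  proof (cases "\<exists>y\<in>set xs. y \<in> W")
    case True
    then obtain y where y: "y \<in> set xs" "y \<in> W" by blast
    then have "filter (\<lambda>x. x \<in> W) xs \<noteq> []" by (auto simp: filter_empty_conv)
    then have worst_Cons: "worst (x # xs) W = worst xs W" by (simp add: worst_def)
    have "worst xs W \<in> W \<and> worst xs W \<in> set xs" using Cons y by auto
    moreover have "pos xs w \<le> pos xs (worst xs W)" if "w \<noteq> x"
      using Cons that by auto
    ultimately show ?thesis using Cons.prems worst_Cons by (auto simp: pos_Cons)
  next
    case False
    then have "w = x" "filter (\<lambda>x. x \<in> W) xs = []"
      using Cons.prems by (auto simp: filter_empty_conv)
    then show ?thesis using Cons.prems by (simp add: worst_def pos_Cons)
  qed
qed simp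

lemma swap_up_top: "pos xs s = 0 \<Longrightarrow> swap_up xs s = xs"
  by (simp add: swap_up_def)

lemma swap_up_eq:
  assumes "s \<in> set xs" "0 < pos xs s"
  shows "swap_up xs s = xs[pos xs s - 1 := xs ! pos xs s, pos xs s := xs ! (pos xs s - 1)]"
  using assms pos_less_length_nth[of s xs] by (simp add: swap_up_def Let_def)

lemma lin_order_swap_up:
  assumes "lin_order A xs" "s \<in> A"
  shows "lin_order A (swap_up xs s)"
proof (cases "pos xs s = 0")
  case False
  have "pos xs s < length xs" using assms pos_less_length_nth[of s xs] by (simp add: lin_order_def)
  then show ?thesis
    using assms False by (simp add: swap_up_eq lin_order_def distinct_swap set_swap)
qed (simp add: assms swap_up_top)

lemma pos_swap_up:
  assumes "distinct xs" "s \<in> set xs" "0 < pos xs s" "x \<in> set xs"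
  shows "pos (swap_up xs s) x =
    (if x = s then pos xs s - 1 else if x = xs ! (pos xs s - 1) then pos xs s else pos xs x)"
proof -
  define k where "k = pos xs s"
  have k: "k < length xs" "xs ! k = s" "0 < k"
    using assms pos_less_length_nth[of s xs] by (auto simp: k_def)
  define ys where "ys = swap_up xs s"
  have ys: "ys = xs[k - 1 := s, k := xs ! (k - 1)]"
    using assms(2,3) k by (simp add: ys_def swap_up_eq k_def)
  have "distinct ys" "length ys = length xs"
    using assms(1) k distinct_swap[of k xs "k - 1"] by (auto simp: ys)
  then have pos_ys: "pos ys (ys ! j) = j" if "j < length xs" for j
    using that pos_nth by metis
  have x: "pos xs x < length xs" "xs ! pos xs x = x"
    using assms(4) pos_less_length_nth by metis+
  have "xs ! (k - 1) \<noteq> s"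
    using assms(1) k nth_eq_iff_index_eq[of xs "k - 1" k] by auto
  moreover have "x \<noteq> s \<Longrightarrow> x \<noteq> xs ! (k - 1) \<Longrightarrow> ys ! pos xs x = x"
    using x k by (auto simp: ys nth_list_update)
  ultimately show ?thesis
    using pos_ys[of "k - 1"] pos_ys[of k] pos_ys[of "pos xs x"] k x
    by (auto simp: ys_def[symmetric] ys k_def[symmetric] nth_list_update)
qed

lemma swap_up_keeps_precedence:
  assumes "distinct xs" "s \<in> set xs" "x \<in> set xs" "y \<in> set xs" "y \<noteq> s"
    and "pos xs x < pos xs y"
  shows "pos (swap_up xs s) x < pos (swap_up xs s) y"
proof (cases "pos xs s = 0")
  case True
  then show ?thesis using assms by (simp add: swap_up_top)
next
  case False
  have "pos xs s < length xs" using assms pos_less_length_nth by metis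
  then have "pos xs (xs ! (pos xs s - 1)) = pos xs s - 1"
    using assms(1) pos_nth[of xs "pos xs s - 1"] by simp
  moreover have "pos xs y \<noteq> pos xs s" using assms pos_eq_iff by metis
  ultimately show ?thesis
    using assms False pos_swap_up[of xs s x] pos_swap_up[of xs s y] by auto
qed

lemma swap_up_reflects_precedence:
  assumes "distinct xs" "s \<in> set xs" "x \<in> set xs" "y \<in> set xs" "x \<noteq> s"
    and "pos (swap_up xs s) x < pos (swap_up xs s) y"
  shows "pos xs x < pos xs y"
proof (rule ccontr)
  assume "\<not> pos xs x < pos xs y"
  moreover have "x \<noteq> y" using assms(6) by blast
  ultimately have "pos xs y < pos xs x" using assms pos_eq_iff by (metis nat_neq_iff)
  then show False
    using assms swap_up_keeps_precedence[of xs s y x] by simp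
qed

lemma swap_up_overtaken:
  assumes "distinct xs" "s \<in> set xs" "x \<in> set xs"
    and "pos xs x < pos xs s" "pos (swap_up xs s) s < pos (swap_up xs s) x"
  shows "x = xs ! (pos xs s - 1)"
proof -
  have "0 < pos xs s" using assms(4) by simp
  then show ?thesis
    using assms pos_swap_up[of xs s x] pos_swap_up[of xs s s] by (auto split: if_splits)
qed

lemma best_swap_up:
  assumes "committee_rule V A F" "SPO V A F" "profile V A P" "i \<in> V"
    and "s \<in> A" "s \<noteq> best (P i) (F P)"
  shows "best (swap_up (P i) s) (F (P(i := swap_up (P i) s))) \<in> {best (P i) (F P), s}"
proof (rule ccontr)
  define xs where "xs = P i"
  define ys where "ys = swap_up xs s"
  define W where "W = F P"
  define W' where "W' = F (P(i := ys))"
  define t where "t = best xs W"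
  define t' where "t' = best ys W'"
  assume "best (swap_up (P i) s) (F (P(i := swap_up (P i) s))) \<notin> {best (P i) (F P), s}"
  then have t': "t' \<noteq> t" "t' \<noteq> s"
    by (simp_all add: t'_def t_def ys_def xs_def W'_def W_def)
  have xs: "lin_order A xs" using assms(3,4) by (simp add: profile_def xs_def)
  then have ys: "lin_order A ys" using assms(5) lin_order_swap_up by (simp add: ys_def)
  have profile': "profile V A (P(i := ys))" using assms(3) ys by (simp add: profile_def)
  have "W \<noteq> {}" "W \<subseteq> A" "W' \<noteq> {}" "W' \<subseteq> A"
    using assms(1,3) profile' by (auto simp: committee_rule_def W_def W'_def)
  then have tW: "t \<in> W" "t \<in> A" and t'W: "t' \<in> W'" "t' \<in> A"
    using best_mem_pos_le[of xs _ W] best_mem_pos_le[of ys _ W'] xs ys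
    by (fastforce simp: lin_order_def t_def t'_def)+
  have "pos xs t \<le> pos xs (best xs W')"
    using assms(2-4) ys by (simp add: SPO_def weak_pref_def t_def xs_def W_def W'_def)
  also have "\<dots> \<le> pos xs t'"
    using best_mem_pos_le[of xs t' W'] xs t'W by (simp add: lin_order_def)
  finally have "pos xs t \<le> pos xs t'" .
  have "pos ys t' \<le> pos ys (best ys W)"
    using assms(2,4) profile' xs unfolding SPO_def weak_pref_def t'_def W'_def W_def
    by (metis fun_upd_same fun_upd_upd fun_upd_triv xs_def)
  also have "\<dots> \<le> pos ys t"
    using best_mem_pos_le[of ys t W] ys tW by (simp add: lin_order_def)
  finally have "pos ys t' < pos ys t"
    using t' tW t'W ys pos_eq_iff[of t' ys t] by (force simp: lin_order_def)
  then have "pos xs t' < pos xs t"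
    using swap_up_reflects_precedence[of xs s t' t] xs assms(5) tW t'W t'
    by (simp add: lin_order_def ys_def)
  with \<open>pos xs t \<le> pos xs t'\<close> show False by simp
qed

lemma worst_swap_up:
  assumes "committee_rule V A F" "SPP V A F" "profile V A P" "i \<in> V"
    and "s \<in> A" "s \<noteq> worst (P i) (F P)"
  shows "worst (swap_up (P i) s) (F (P(i := swap_up (P i) s))) \<in> {worst (P i) (F P), s}"
proof (rule ccontr)
  define xs where "xs = P i"
  define ys where "ys = swap_up xs s"
  define W where "W = F P"
  define W' where "W' = F (P(i := ys))"
  define b where "b = worst xs W"
  define b' where "b' = worst ys W'"
  define c where "c = worst xs W'"
  assume "worst (swap_up (P i) s) (F (P(i := swap_up (P i) s))) \<notin> {worst (P i) (F P), s}"
  then have b': "b' \<noteq> b" "b' \<noteq> s"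
    by (simp_all add: b'_def b_def ys_def xs_def W'_def W_def)
  have b: "b \<noteq> s" using assms(6) by (simp add: b_def xs_def W_def)
  have xs: "distinct xs" "set xs = A" "lin_order A xs"
    using assms(3,4) by (simp_all add: profile_def xs_def lin_order_def)
  then have ys: "distinct ys" "set ys = A" "lin_order A ys"
    using assms(5) lin_order_swap_up[of A xs s] by (simp_all add: ys_def lin_order_def)
  have profile': "profile V A (P(i := ys))" using assms(3) ys by (simp add: profile_def)
  have "W \<noteq> {}" "W \<subseteq> A" "W' \<noteq> {}" "W' \<subseteq> A"
    using assms(1,3) profile' by (auto simp: committee_rule_def W_def W'_def)
  then have bW: "b \<in> W" "b \<in> A" and b'W: "b' \<in> W'" "b' \<in> A" and cW: "c \<in> W'" "c \<in> A"
    using worst_mem_pos_ge[of xs _ W] worst_mem_pos_ge[of ys _ W'] worst_mem_pos_ge[of xs _ W'] xs ys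
    by (fastforce simp: b_def b'_def c_def)+
  have "worst ys W = b"
  proof (rule ccontr)
    define d where "d = worst ys W"
    assume "worst ys W \<noteq> b"
    then have "d \<noteq> b" by (simp add: d_def)
    have "d \<in> W" "pos ys b \<le> pos ys d"
      using worst_mem_pos_ge[of ys b W] ys bW by (simp_all add: d_def)
    moreover have "pos xs d \<le> pos xs b"
      using worst_mem_pos_ge[of xs d W] xs \<open>d \<in> W\<close> \<open>W \<subseteq> A\<close> by (auto simp: b_def)
    ultimately have "pos xs d < pos xs b" "pos ys b < pos ys d"
      using \<open>d \<noteq> b\<close> \<open>W \<subseteq> A\<close> bW xs ys pos_eq_iff[of d xs b] pos_eq_iff[of b ys d]
      by (auto simp: order.order_iff_strict)
    then show False
      using swap_up_keeps_precedence[of xs s d b] xs assms(5) b bW \<open>d \<in> W\<close> \<open>W \<subseteq> A\<close>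
      by (auto simp: ys_def)
  qed
  then have "pos ys b' \<le> pos ys b"
    using assms(2,4) profile' xs unfolding SPP_def weak_pref_def b'_def W'_def W_def
    by (metis fun_upd_same fun_upd_upd fun_upd_triv xs_def)
  then have b'_b: "pos ys b' < pos ys b"
    using b' bW b'W ys pos_eq_iff[of b' ys b] by force
  have b_c: "pos xs b \<le> pos xs c"
    using assms(2-4) ys by (simp add: SPP_def weak_pref_def b_def c_def xs_def W_def W'_def)
  have b'_c: "pos xs b' \<le> pos xs c" using worst_mem_pos_ge[of xs b' W'] xs b'W by (simp add: c_def)
  have c_b': "pos ys c \<le> pos ys b'" using worst_mem_pos_ge[of ys c W'] ys cW by (simp add: b'_def)
  show False
  proof (cases "c = s")
    case True
    have "pos xs b < pos xs s" "pos xs b' < pos xs s"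
      using b_c b'_c b b' True bW b'W xs assms(5) pos_eq_iff[of _ xs s] by (auto simp: order.order_iff_strict)
    moreover have "pos ys s < pos ys b'" "pos ys s < pos ys b"
      using c_b' b'_b b' True b'W ys assms(5) pos_eq_iff[of s ys b'] by (auto simp: order.order_iff_strict)
    ultimately have "b = xs ! (pos xs s - 1)" "b' = xs ! (pos xs s - 1)"
      using swap_up_overtaken[of xs s] xs assms(5) bW b'W by (auto simp: ys_def)
    with b' show False by simp
  next
    case False
    have "pos ys c < pos ys b" using c_b' b'_b by simp
    then have "pos xs c < pos xs b"
      using swap_up_reflects_precedence[of xs s c b] False xs assms(5) bW cW by (simp add: ys_def)
    with b_c show False by simp
  qed
qed

theorem lemma7:
  fixes V :: "'v set" and A :: "'a set" and F :: "('v \<Rightarrow> 'a list) \<Rightarrow> 'a set"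
  assumes "finite V" and "V \<noteq> {}" and "finite A"
    and "committee_rule V A F" and "SPO V A F" and "SPP V A F"
    and "profile V A P" and "i \<in> V"
    and "best (P i) (F P) \<noteq> worst (P i) (F P)"
    and "s \<in> A" and "s \<noteq> best (P i) (F P)" and "s \<noteq> worst (P i) (F P)"
  shows "best (swap_up (P i) s) (F (P(i := swap_up (P i) s))) \<in> {best (P i) (F P), s}
       \<and> worst (swap_up (P i) s) (F (P(i := swap_up (P i) s))) \<in> {worst (P i) (F P), s}"
  using best_swap_up[OF assms(4,5,7,8,10,11)] worst_swap_up[OF assms(4,6,7,8,10,12)] by blast

end
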